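(* Let $(X,\le)$ be a well-ordered set, $k>0$, let $<_1,<_2$ be upward strict orders on $X^k$, and let $U$ be a $<_1,<_2$-$\#$-decreasing function assignment for $X^k$. Then there exists a unique function $f:X^k\to X^k$ such that for every finite $A\subseteq X^k$ there is a finite $B$ with $A\subseteq B\subseteq X^k$ and $U(B)\subseteq f$ (as graphs).
   Context: A function assignment for $X^k$ assigns to each finite $A\subseteq X^k$ a function $U(A):A\to A$, identified with its graph. A strict order is a transitive irreflexive relation. For $x,y\in X^k$, $x\le_c y$ iff $x_i\le y_i$ for all $i$ (using the order $\le$ of $X$); a strict order $<$ on $X^k$ is upward iff $x\le_c y$ implies not $y<x$. $U$ is $<_1,<_2$-$\#$-decreasing iff for all finite $A\subseteq X^k$ and $x\in X^k$, either $U(A)\subseteq U(A\cup\{x\})$ or there exists $y$ with $x<_1y$ and $U(A\cup\{x\})(y)<_2U(A)(y)$. *)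

theory Defs
  imports Main
begin

text \<open>Points of X^k are modelled as functions from a finite index type 'k
 (with CARD('k) = k > 0, automatic since types are nonempty) into X = 'a.\<close>

definition graph_on :: "'b set \<Rightarrow> ('b \<Rightarrow> 'b) \<Rightarrow> ('b \<times> 'b) set" where
  "graph_on A g = {(x, g x) | x. x \<in> A}"

definition fgraph :: "('b \<Rightarrow> 'b) \<Rightarrow> ('b \<times> 'b) set" where
  "fgraph g = {(x, g x) | x. True}"

definition function_assignment :: "('b set \<Rightarrow> 'b \<Rightarrow> 'b) \<Rightarrow> bool" where
  "function_assignment U \<longleftrightarrow> (\<forall>A. finite A \<longrightarrow> (\<forall>x\<in>A. U A x \<in> A))"

definition strict_order :: "('b \<Rightarrow> 'b \<Rightarrow> bool) \<Rightarrow> bool" where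
  "strict_order r \<longleftrightarrow> (\<forall>x y z. r x y \<longrightarrow> r y z \<longrightarrow> r x z) \<and> (\<forall>x. \<not> r x x)"

definition le_c :: "('k \<Rightarrow> 'a::order) \<Rightarrow> ('k \<Rightarrow> 'a) \<Rightarrow> bool" where
  "le_c x y \<longleftrightarrow> (\<forall>i. x i \<le> y i)"

definition upward :: "(('k \<Rightarrow> 'a::order) \<Rightarrow> ('k \<Rightarrow> 'a) \<Rightarrow> bool) \<Rightarrow> bool" where
  "upward r \<longleftrightarrow> (\<forall>x y. le_c x y \<longrightarrow> \<not> r y x)"

text \<open>U(A) is a function A -> A; its graph is graph_on A (U A). Values U A y
 outside A are irrelevant.\<close>
definition hash_decreasing ::
  "('b \<Rightarrow> 'b \<Rightarrow> bool) \<Rightarrow> ('b \<Rightarrow> 'b \<Rightarrow> bool) \<Rightarrow> ('b set \<Rightarrow> 'b \<Rightarrow> 'b) \<Rightarrow> bool" where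
  "hash_decreasing r1 r2 U \<longleftrightarrow>
     (\<forall>A x. finite A \<longrightarrow>
        graph_on A (U A) \<subseteq> graph_on (A \<union> {x}) (U (A \<union> {x})) \<or>
        (\<exists>y. y \<in> A \<and> r1 x y \<and> r2 (U (A \<union> {x}) y) (U A y)))"

end

theory Submission
  imports Defs "HOL.Topological_Spaces"
begin

text \<open>Upward strict orders on X^k are well-founded by Dickson's lemma. Being \<open>#\<close>-decreasing
  means that enlarging A can change U(A) at p only by making it \<open><\<^sub>2\<close>-smaller at some point
  \<open>\<le>\<^sub>1 p\<close>, so along growing sets U decreases lexicographically (\<open>lex_le_on\<close>). The limit f is
  defined by recursion along \<open><\<^sub>1\<close>: f y is the \<open><\<^sub>2\<close>-least value U(E)(y) over finite sets E
  below y on which U(E) already agrees with f off y. Finite sets on which U agrees with f are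
  closed under union, which gives existence; two limits cannot differ, since at a
  \<open><\<^sub>1\<close>-minimal point of disagreement each would be \<open><\<^sub>2\<close>-below the other.\<close>

lemma strict_orderD:
  assumes "strict_order r"
  shows strict_order_trans: "r x y \<Longrightarrow> r y z \<Longrightarrow> r x z"
    and strict_order_irrefl: "\<not> r x x"
  using assms unfolding strict_order_def by blast+

lemma strict_order_on:
  assumes "strict_order r"
  shows "asymp_on A r" "transp_on A r"
  using assms unfolding strict_order_def transp_on_def asymp_on_def by blast+

lemma wellorder_incseq_subseq:
  fixes s :: "nat \<Rightarrow> 'a::wellorder"
  obtains r where "strict_mono r" "incseq (\<lambda>n. s (r n))"
proof -
  obtain f where f: "strict_mono f" "monoseq (\<lambda>n. s (f n))"
    using seq_monosub by blast
  show thesis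
  proof (cases "incseq (\<lambda>n. s (f n))")
    case True
    with f(1) show thesis by (rule that)
  next
    case False
    with f(2) have dec: "s (f n) \<le> s (f m)" if "m \<le> n" for m n
      using that unfolding monoseq_def incseq_def by blast
    obtain N where "s (f N) = (LEAST v. v \<in> range (\<lambda>n. s (f n)))"
      using LeastI[of "\<lambda>v. v \<in> range (\<lambda>n. s (f n))" "s (f 0)"] by auto
    then have "s (f N) \<le> s (f n)" for n
      by (simp add: Least_le)
    then have const: "s (f (N + n)) = s (f N)" for n
      using dec[of N "N + n"] by (simp add: order_antisym)
    show thesis
    proof (rule that)
      show "strict_mono (\<lambda>n. f (N + n))"
        using f(1) by (simp add: strict_mono_def)
      show "incseq (\<lambda>n. s (f (N + n)))"
        by (simp add: const incseq_def)
    qed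
  qed
qed

lemma dickson:
  fixes s :: "nat \<Rightarrow> 'k::finite \<Rightarrow> 'a::wellorder"
  obtains r where "strict_mono r" "\<And>i. incseq (\<lambda>n. s (r n) i)"
proof -
  have "\<exists>r. strict_mono r \<and> (\<forall>i\<in>K. incseq (\<lambda>n. s (r n) i))" if "finite K" for K :: "'k set"
    using that
  proof (induction K rule: finite_induct)
    case empty
    show ?case by (rule exI[of _ id]) (simp add: strict_mono_def)
  next
    case (insert c K)
    then obtain r where r: "strict_mono r" "\<forall>i\<in>K. incseq (\<lambda>n. s (r n) i)"
      by blast
    obtain r' where r': "strict_mono r'" "incseq (\<lambda>n. s (r (r' n)) c)"
      by (rule wellorder_incseq_subseq)
    have "incseq (\<lambda>n. s (r (r' n)) i)" if "i \<in> K" for i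
      unfolding incseq_def
    proof (intro allI impI)
      fix m n :: nat
      assume "m \<le> n"
      then have "r' m \<le> r' n"
        using r'(1) by (simp add: strict_mono_less_eq)
      then show "s (r (r' m)) i \<le> s (r (r' n)) i"
        using r(2) that unfolding incseq_def by blast
    qed
    with r(1) r' show ?case
      by (intro exI[of _ "\<lambda>n. r (r' n)"]) (simp add: strict_mono_compose)
  qed
  from this[of UNIV] obtain r where "strict_mono r" "\<forall>i. incseq (\<lambda>n. s (r n) i)"
    by auto
  then show thesis
    by (intro that) auto
qed

lemma transp_descending_chain:
  assumes "transp r" "\<And>n. r (s (Suc n)) (s n)" "i < j"
  shows "r (s j) (s i)"
  using assms(3)
proof (induction j)
  case (Suc j)
  then show ?case
    using assms(1,2) by (metis less_Suc_eq transpD)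
qed simp

lemma upward_wfp:
  fixes r :: "('k::finite \<Rightarrow> 'a::wellorder) \<Rightarrow> ('k \<Rightarrow> 'a) \<Rightarrow> bool"
  assumes "strict_order r" "upward r"
  shows "wfp r"
proof -
  have "\<not> (\<forall>n. r (s (Suc n)) (s n))" for s
  proof
    assume chain: "\<forall>n. r (s (Suc n)) (s n)"
    obtain h where h: "strict_mono h" "\<And>i. incseq (\<lambda>n. s (h n) i)"
      using dickson[of s] by blast
    have "le_c (s (h 0)) (s (h 1))"
      using h(2) unfolding le_c_def incseq_def by simp
    moreover have "r (s (h 1)) (s (h 0))"
      using transp_descending_chain[of r s] chain strict_order_on(2)[OF assms(1)] h(1)
      by (simp add: strict_mono_less)
    ultimately show False
      using assms(2) unfolding upward_def by blast
  qed
  then show ?thesis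
    unfolding wfp_def wf_iff_no_infinite_down_chain by simp
qed

definition lex_le_on ::
  "('b \<Rightarrow> 'b \<Rightarrow> bool) \<Rightarrow> ('c \<Rightarrow> 'c \<Rightarrow> bool) \<Rightarrow> 'b set \<Rightarrow> ('b \<Rightarrow> 'c) \<Rightarrow> ('b \<Rightarrow> 'c) \<Rightarrow> bool" where
  "lex_le_on r1 r2 E g h \<longleftrightarrow>
     (\<forall>p\<in>E. g p \<noteq> h p \<longrightarrow> (\<exists>q\<in>E. (q = p \<or> r1 q p) \<and> r2 (g q) (h q)))"

lemma lex_le_on_refl [simp]: "lex_le_on r1 r2 E g g"
  unfolding lex_le_on_def by simp

lemma lex_le_on_least_difference:
  assumes "lex_le_on r1 r2 E g h" "strict_order r2"
    and "q \<in> E" "g q \<noteq> h q" "\<And>z. z \<in> E \<Longrightarrow> r1 z q \<Longrightarrow> g z = h z"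
  shows "r2 (g q) (h q)"
proof -
  obtain z where "z \<in> E" "z = q \<or> r1 z q" "r2 (g z) (h z)"
    using assms(1,3,4) unfolding lex_le_on_def by blast
  moreover from this have "g z \<noteq> h z"
    using strict_order_irrefl[OF assms(2)] by metis
  ultimately show ?thesis
    using assms(5) by blast
qed

lemma lex_le_on_trans:
  assumes "finite E" "strict_order r1" "strict_order r2"
    and gh: "lex_le_on r1 r2 E g h" and hk: "lex_le_on r1 r2 E h k"
  shows "lex_le_on r1 r2 E g k"
  unfolding lex_le_on_def
proof (intro ballI impI)
  fix p assume "p \<in> E" "g p \<noteq> k p"
  then obtain q where q: "q \<in> E" "q = p \<or> r1 q p" "g q \<noteq> h q \<or> h q \<noteq> k q"
    and least: "\<And>z. z \<in> E \<Longrightarrow> r1 z q \<Longrightarrow> \<not> ((z = p \<or> r1 z p) \<and> (g z \<noteq> h z \<or> h z \<noteq> k z))"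
    using Finite_Set.bex_min_element_with_property[OF assms(1) strict_order_on[OF assms(2)],
        of "\<lambda>q. (q = p \<or> r1 q p) \<and> (g q \<noteq> h q \<or> h q \<noteq> k q)"]
    by fastforce
  have below: "g z = h z \<and> h z = k z" if "z \<in> E" "r1 z q" for z
    using least[OF that] q(2) that(2) strict_order_trans[OF assms(2)] by blast
  have "r2 (g q) (h q)" if "g q \<noteq> h q"
    using lex_le_on_least_difference[OF gh assms(3) q(1) that] below by blast
  moreover have "r2 (h q) (k q)" if "h q \<noteq> k q"
    using lex_le_on_least_difference[OF hk assms(3) q(1) that] below by blast
  ultimately have "r2 (g q) (k q)"
    using q(3) strict_order_trans[OF assms(3)] by metis
  then show "\<exists>q\<in>E. (q = p \<or> r1 q p) \<and> r2 (g q) (k q)"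
    using q(1,2) by blast
qed

lemma finite_subset_induct_maximal [consumes 3, case_names base insert]:
  assumes "strict_order r" "finite C" "E \<subseteq> C"
    and "P E"
    and "\<And>C' x. finite C' \<Longrightarrow> E \<subseteq> C' \<Longrightarrow> x \<notin> C' \<Longrightarrow> insert x C' \<subseteq> C \<Longrightarrow>
           (\<forall>c\<in>C' - E. \<not> r x c) \<Longrightarrow> P C' \<Longrightarrow> P (insert x C')"
  shows "P C"
proof -
  have "P (E \<union> S)" if "finite S" "S \<subseteq> C - E" for S
    using that
  proof (induction S rule: finite_remove_induct)
    case (remove S)
    obtain x where x: "x \<in> S" "\<forall>c\<in>S. \<not> r x c"
      using Finite_Set.bex_max_element[OF remove.hyps(1) strict_order_on[OF assms(1)] remove.hyps(2)]
        strict_order_irrefl[OF assms(1)] by metis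
    have "P (insert x (E \<union> (S - {x})))"
      using assms(5)[of "E \<union> (S - {x})" x] remove x assms(2,3) by (auto intro: finite_subset)
    moreover have "insert x (E \<union> (S - {x})) = E \<union> S"
      using x(1) by blast
    ultimately show ?case by simp
  qed (use assms(4) in simp)
  from this[of "C - E"] show ?thesis
    using assms(2,3) by (simp add: Un_absorb1)
qed

lemma graph_on_subset_iff: "graph_on A g \<subseteq> graph_on B h \<longleftrightarrow> A \<subseteq> B \<and> (\<forall>p\<in>A. g p = h p)"
  unfolding graph_on_def by blast

lemma graph_on_subset_fgraph_iff: "graph_on A g \<subseteq> fgraph h \<longleftrightarrow> (\<forall>p\<in>A. g p = h p)"
  unfolding graph_on_def fgraph_def by blast

locale hash_decreasing_assignment =
  fixes lt1 lt2 :: "'b \<Rightarrow> 'b \<Rightarrow> bool" and U :: "'b set \<Rightarrow> 'b \<Rightarrow> 'b"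
  assumes strict1: "strict_order lt1" and strict2: "strict_order lt2"
    and hash: "hash_decreasing lt1 lt2 U"
begin

lemma hash_insert:
  assumes "finite A"
  shows "(\<forall>p\<in>A. U (insert x A) p = U A p) \<or> (\<exists>y\<in>A. lt1 x y \<and> lt2 (U (insert x A) y) (U A y))"
  using hash assms unfolding hash_decreasing_def graph_on_subset_iff
  by (metis Un_insert_right sup_bot.right_neutral)

lemma U_eq_on_down_closed:
  assumes "finite C" "D \<subseteq> C" "\<And>c d. c \<in> C \<Longrightarrow> d \<in> D \<Longrightarrow> lt1 c d \<Longrightarrow> c \<in> D"
  shows "\<forall>p\<in>D. U C p = U D p"
  using strict1 assms(1,2)
proof (induction rule: finite_subset_induct_maximal)
  case (insert C' x)
  have "\<not> lt1 x y" if "y \<in> C'" for y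
  proof
    assume "lt1 x y"
    then show False
      using that insert.hyps(2-5) assms(3)[of x y] by (cases "y \<in> D") auto
  qed
  then show ?case
    using hash_insert[OF insert.hyps(1), of x] insert.hyps(2) insert.IH by auto
qed simp

definition down :: "'b \<Rightarrow> 'b set" where
  "down y = {p. p = y \<or> lt1 p y}"

lemma U_eq_U_Int_down:
  assumes "finite C" "q \<in> C \<inter> down p"
  shows "U C q = U (C \<inter> down p) q"
  using U_eq_on_down_closed[OF assms(1), of "C \<inter> down p"] assms strict_order_trans[OF strict1]
  unfolding down_def by blast

lemma U_insert_change:
  assumes "finite C" "x \<notin> C" "p \<in> C" "U (insert x C) p \<noteq> U C p"
  shows "\<exists>w\<in>C. lt1 x w \<and> (w = p \<or> lt1 w p) \<and> lt2 (U (insert x C) w) (U C w)"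
proof -
  define P where "P = C \<inter> down p"
  have p: "p \<in> P" "p \<in> insert x C \<inter> down p"
    using assms(3) unfolding P_def down_def by auto
  have local: "U (insert x C) w = U (insert x C \<inter> down p) w" "U C w = U P w" if "w \<in> P" for w
    using that U_eq_U_Int_down[of "insert x C" w p] U_eq_U_Int_down[OF assms(1), of w p] assms(1)
    unfolding P_def by auto
  have "lt1 x p"
  proof (rule ccontr)
    assume "\<not> lt1 x p"
    then have "insert x C \<inter> down p = P"
      using assms(2,3) unfolding P_def down_def by auto
    then show False
      using local(1,2)[OF p(1)] assms(4) by simp
  qed
  then have insert_P: "insert x C \<inter> down p = insert x P"
    unfolding P_def down_def by auto
  have "finite P"
    using assms(1) unfolding P_def by simp
  from hash_insert[OF this, of x] show ?thesis
  proof
    assume "\<forall>q\<in>P. U (insert x P) q = U P q"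
    then show ?thesis
      using local[OF p(1)] insert_P p(1) assms(4) by simp
  next
    assume "\<exists>w\<in>P. lt1 x w \<and> lt2 (U (insert x P) w) (U P w)"
    then show ?thesis
      using local insert_P unfolding P_def down_def by auto
  qed
qed

lemma U_lex_le_on_subset:
  assumes "finite C" "E \<subseteq> C"
  shows "lex_le_on lt1 lt2 E (U C) (U E)"
  using strict1 assms
proof (induction rule: finite_subset_induct_maximal)
  case (insert C' x)
  have "lex_le_on lt1 lt2 E (U (insert x C')) (U C')"
    unfolding lex_le_on_def
  proof (intro ballI impI)
    fix p assume "p \<in> E" "U (insert x C') p \<noteq> U C' p"
    then obtain w where "w \<in> C'" "lt1 x w" "w = p \<or> lt1 w p" "lt2 (U (insert x C') w) (U C' w)"
      using U_insert_change[OF insert.hyps(1,3)] insert.hyps(2) by blast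
    moreover from this have "w \<in> E"
      using insert.hyps(5) by blast
    ultimately show "\<exists>q\<in>E. (q = p \<or> lt1 q p) \<and> lt2 (U (insert x C') q) (U C' q)"
      by blast
  qed
  then show ?case
    using lex_le_on_trans[OF _ strict1 strict2 _ insert.IH] insert.hyps(1,2) finite_subset by blast
qed simp

definition agrees_on :: "('b \<Rightarrow> 'b) \<Rightarrow> 'b set \<Rightarrow> bool" where
  "agrees_on f B \<longleftrightarrow> (\<forall>p\<in>B. U B p = f p)"

definition is_limit :: "('b \<Rightarrow> 'b) \<Rightarrow> bool" where
  "is_limit f \<longleftrightarrow> (\<forall>A. finite A \<longrightarrow> (\<exists>B. finite B \<and> A \<subseteq> B \<and> agrees_on f B))"

end

locale wf_hash_decreasing_assignment = hash_decreasing_assignment lt1 lt2 U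
  for lt1 lt2 :: "'b \<Rightarrow> 'b \<Rightarrow> bool" and U +
  assumes wf1: "wfp lt1" and wf2: "wfp lt2"
begin

lemma limit_unique:
  assumes "is_limit f" "is_limit g"
  shows "f = g"
proof (rule ccontr)
  assume "f \<noteq> g"
  then obtain x0 where x0: "x0 \<in> {x. f x \<noteq> g x}"
    by auto
  obtain x where x: "f x \<noteq> g x" and below: "\<And>z. lt1 z x \<Longrightarrow> f z = g z"
    using wfE_min[OF wf1[unfolded wfp_def] x0] by auto
  obtain B1 where B1: "finite B1" "x \<in> B1" "agrees_on f B1"
    using assms(1)[unfolded is_limit_def, rule_format, of "{x}"] by auto
  obtain B2 where B2: "finite B2" "B1 \<subseteq> B2" "agrees_on g B2"
    using assms(2) B1(1) unfolding is_limit_def by blast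
  obtain B3 where B3: "finite B3" "B2 \<subseteq> B3" "agrees_on f B3"
    using assms(1) B2(1) unfolding is_limit_def by blast
  have xB: "x \<in> B2" "x \<in> B3"
    using B1(2) B2(2) B3(2) by auto
  have at_x: "U B1 x = f x" "U B2 x = g x" "U B3 x = f x"
    using B1 B2 B3 xB unfolding agrees_on_def by auto
  have "lt2 (U B2 x) (U B1 x)"
    by (rule lex_le_on_least_difference[OF U_lex_le_on_subset[OF B2(1,2)] strict2 B1(2)])
       (use B1 B2 x below at_x in \<open>auto simp: agrees_on_def\<close>)
  moreover have "lt2 (U B3 x) (U B2 x)"
    by (rule lex_le_on_least_difference[OF U_lex_le_on_subset[OF B3(1,2)] strict2 xB(1)])
       (use B2 B3 x below at_x in \<open>auto simp: agrees_on_def\<close>)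
  ultimately show False
    using strict_order_trans[OF strict2, of "f x" "g x" "f x"] strict_order_irrefl[OF strict2]
    by (simp add: at_x)
qed

definition candidate :: "('b \<Rightarrow> 'b) \<Rightarrow> 'b \<Rightarrow> 'b set \<Rightarrow> bool" where
  "candidate g y E \<longleftrightarrow> finite E \<and> y \<in> E \<and> E \<subseteq> down y \<and> (\<forall>p\<in>E - {y}. U E p = g p)"

definition optimal_candidate :: "('b \<Rightarrow> 'b) \<Rightarrow> 'b \<Rightarrow> 'b set \<Rightarrow> bool" where
  "optimal_candidate g y E \<longleftrightarrow>
     candidate g y E \<and> (\<forall>E'. candidate g y E' \<longrightarrow> \<not> lt2 (U E' y) (U E y))"

definition limit_step :: "('b \<Rightarrow> 'b) \<Rightarrow> 'b \<Rightarrow> 'b" where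
  "limit_step g y = U (SOME E. optimal_candidate g y E) y"

definition limit :: "'b \<Rightarrow> 'b" where
  "limit = wfrec {(a, b). lt1 a b} limit_step"

lemma ex_optimal_candidate: "\<exists>E. optimal_candidate g y E"
proof -
  have singleton: "U {y} y \<in> {U E y | E. candidate g y E}"
    unfolding candidate_def down_def by auto
  obtain v where v: "v \<in> {U E y | E. candidate g y E}"
    and least: "\<And>w. (w, v) \<in> {(a, b). lt2 a b} \<Longrightarrow> w \<notin> {U E y | E. candidate g y E}"
    using wfE_min[OF wf2[unfolded wfp_def] singleton] by auto
  from v obtain E where "candidate g y E" "v = U E y"
    by auto
  with least show ?thesis
    unfolding optimal_candidate_def by auto
qed

lemma limit_step_cong:
  assumes "\<And>p. lt1 p y \<Longrightarrow> g p = g' p"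
  shows "limit_step g y = limit_step g' y"
proof -
  have "(\<forall>p\<in>E - {y}. U E p = g p) \<longleftrightarrow> (\<forall>p\<in>E - {y}. U E p = g' p)" if "E \<subseteq> down y" for E
  proof -
    have "g p = g' p" if "p \<in> E - {y}" for p
      using that \<open>E \<subseteq> down y\<close> assms unfolding down_def by blast
    then show ?thesis
      by simp
  qed
  then have "candidate g y E \<longleftrightarrow> candidate g' y E" for E
    unfolding candidate_def by blast
  then have "candidate g y = candidate g' y"
    by blast
  then show ?thesis
    unfolding limit_step_def optimal_candidate_def by simp
qed

lemma limit_unfold: "limit y = limit_step limit y"
proof -
  have "limit y = limit_step (cut limit {(a, b). lt1 a b} y) y"
    unfolding limit_def by (rule wfrec[OF wf1[unfolded wfp_def]])
  also have "\<dots> = limit_step limit y"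
    by (rule limit_step_cong) (simp add: cut_def)
  finally show ?thesis .
qed

lemma limit_optimal:
  obtains E where "optimal_candidate limit y E" "U E y = limit y"
proof
  show "optimal_candidate limit y (SOME E. optimal_candidate limit y E)"
    by (rule someI_ex[OF ex_optimal_candidate])
  show "U (SOME E. optimal_candidate limit y E) y = limit y"
    by (simp add: limit_unfold[of y] limit_step_def)
qed

lemma limit_minimal: "candidate limit y E \<Longrightarrow> \<not> lt2 (U E y) (limit y)"
  by (rule limit_optimal[of y]) (auto simp: optimal_candidate_def)

lemma ex_agreeing_set: "\<exists>E. finite E \<and> y \<in> E \<and> agrees_on limit E"
proof -
  obtain E where "optimal_candidate limit y E" "U E y = limit y"
    by (rule limit_optimal)
  then show ?thesis
    unfolding optimal_candidate_def candidate_def agrees_on_def by blast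
qed

lemma agrees_on_Un:
  assumes "finite B1" "finite B2" "agrees_on limit B1" "agrees_on limit B2"
  shows "agrees_on limit (B1 \<union> B2)"
proof (rule ccontr)
  define B where "B = B1 \<union> B2"
  assume "\<not> agrees_on limit (B1 \<union> B2)"
  then obtain q where q: "q \<in> B" "U B q \<noteq> limit q"
    and below: "\<And>z. z \<in> B \<Longrightarrow> lt1 z q \<Longrightarrow> U B z = limit z"
    using Finite_Set.bex_min_element_with_property[of B lt1 "\<lambda>q. U B q \<noteq> limit q"]
      strict_order_on[OF strict1] assms(1,2) unfolding B_def agrees_on_def by blast
  have "finite B"
    using assms(1,2) unfolding B_def by simp
  have "lt2 (U B q) (limit q)" if "Bi \<subseteq> B" "agrees_on limit Bi" "q \<in> Bi" for Bi
  proof -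
    have "lt2 (U B q) (U Bi q)"
      by (rule lex_le_on_least_difference[OF U_lex_le_on_subset[OF \<open>finite B\<close> that(1)] strict2])
         (use that q below in \<open>auto simp: agrees_on_def\<close>)
    then show ?thesis
      using that unfolding agrees_on_def by simp
  qed
  then have less: "lt2 (U B q) (limit q)"
    using q(1) assms(3,4) unfolding B_def by blast
  have "candidate limit q (B \<inter> down q)"
    unfolding candidate_def
    using \<open>finite B\<close> q(1) below U_eq_U_Int_down[OF \<open>finite B\<close>, of _ q]
    by (auto simp: down_def)
  moreover have "U (B \<inter> down q) q = U B q"
    using U_eq_U_Int_down[OF \<open>finite B\<close>, of q q] q(1) by (simp add: down_def)
  ultimately show False
    using limit_minimal[of q "B \<inter> down q"] less by simp
qed

lemma is_limit_limit: "is_limit limit"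
  unfolding is_limit_def
proof (intro allI impI)
  fix A :: "'b set"
  assume "finite A"
  then show "\<exists>B. finite B \<and> A \<subseteq> B \<and> agrees_on limit B"
  proof (induction A rule: finite_induct)
    case empty
    show ?case by (rule exI[of _ "{}"]) (simp add: agrees_on_def)
  next
    case (insert a A)
    then obtain B where "finite B" "A \<subseteq> B" "agrees_on limit B"
      by blast
    moreover obtain E where "finite E" "a \<in> E" "agrees_on limit E"
      using ex_agreeing_set by blast
    ultimately show ?case
      using agrees_on_Un by (intro exI[of _ "B \<union> E"]) blast
  qed
qed

theorem ex1_limit: "\<exists>!f. is_limit f"
  using is_limit_limit limit_unique by blast

end

theorem theorem4p16:
  fixes lt1 lt2 :: "('k::finite \<Rightarrow> 'a::wellorder) \<Rightarrow> ('k \<Rightarrow> 'a) \<Rightarrow> bool"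
    and U :: "('k \<Rightarrow> 'a) set \<Rightarrow> ('k \<Rightarrow> 'a) \<Rightarrow> ('k \<Rightarrow> 'a)"
  assumes "strict_order lt1" and "strict_order lt2"
    and "upward lt1" and "upward lt2"
    and "function_assignment U"
    and "hash_decreasing lt1 lt2 U"
  shows "\<exists>!f :: ('k \<Rightarrow> 'a) \<Rightarrow> ('k \<Rightarrow> 'a).
           \<forall>A. finite A \<longrightarrow>
             (\<exists>B. finite B \<and> A \<subseteq> B \<and> graph_on B (U B) \<subseteq> fgraph f)"
proof -
  interpret wf_hash_decreasing_assignment lt1 lt2 U
    using assms(1,2,6) upward_wfp[OF assms(1,3)] upward_wfp[OF assms(2,4)]
    by unfold_locales
  show ?thesis
    using ex1_limit unfolding is_limit_def agrees_on_def graph_on_subset_fgraph_iff .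
qed

end
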